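(* After the event-update procedure has processed an event $e\in E_A$ (with all events processed along a linear extension of the causal order of $M$, each by the monitor of its own lifeline), the following hold for every lifeline $B$: (i) $\mathsf{vc}_A(B)=|\{f\in E_B\mid f\leq_M e\}|$; (ii) if $\mathsf{vc}_A(B)=0$, then all entries $\mathsf{var}_A(B,x)$ and $\mathsf{view}_A(B,\psi)$ are absent; (iii) if $\mathsf{vc}_A(B)=k>0$, then $\mathsf{var}_A(B,x)$ is defined and equal to $\mathsf{val}(e^B_k)(x)$ for every $x\in\mathsf{Vars}(\Phi)$; (iv) if $\mathsf{vc}_A(B)=k>0$, then $\mathsf{view}_A(B,\psi)$ is defined and $\mathsf{view}_A(B,\psi)=1$ iff $M,e^B_k\models\psi$, for every $\psi\in\mathsf{sub}(\Phi)$.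
   Context: Setting. $\mathscr L$ is a finite set of lifelines. A message sequence chart (MSC) is $M=(E,\to,\lhd,\mathsf{kind},\mathsf{pid},\mathsf{val})$ with $E$ a finite set of events, $\mathsf{pid}:E\to\mathscr L$, $E_A=\{e\in E\mid \mathsf{pid}(e)=A\}$. The relation $\to$ relates only events on the same lifeline, and for each $A$ its restriction to $E_A$ is the immediate-successor relation of a finite linear order $\leq_A$ (strict version $<_A$). $\mathsf{kind}(e)\in\{\mathsf{act},\mathsf{recv},\mathsf{choice}\}\cup(\{\mathsf{send}\}\times\mathscr L)$. The message relation $\lhd$ is a partial matching: if $s\lhd r$ then $\mathsf{kind}(s)=(\mathsf{send},\mathsf{pid}(r))$, $\mathsf{kind}(r)=\mathsf{recv}$, $\mathsf{pid}(s)\neq\mathsf{pid}(r)$; every receive has exactly one matching send, every send at most one matching receive (not necessarily FIFO). The graph of $\to$ and $\lhd$ edges is acyclic; the causal order $\leq_M$ is its reflexive transitive closure. $\nu_e=\mathsf{val}(e)$ is the valuation (local store of $\mathsf{pid}(e)$ after $e$). $e^B_k$ is the $k$-th event of lifeline $B$ (indexing from 1). Causal Past Logic (CPL): terms $t::=x\mid A.x$; atoms $\alpha::=p(t_1,\dots,t_n)$; formulas $\varphi::=\alpha\mid @_A\varphi\mid \mathsf{Y}\varphi\mid\varphi_1\mathbin{\mathsf{S}}\varphi_2\mid\varphi_1\wedge\varphi_2\mid\varphi_1\vee\varphi_2\mid\neg\varphi$. For $e$ with $\mathsf{pid}(e)=A$: $\mathsf{last}_{\mathsf{loc}}(e)=\max\{f\in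 E_A\mid f<_A e\}$ and $\mathsf{last}_B(e)=\max\{f\in E_B\mid f\leq_M e\}$ (when they exist). Term $x$ evaluates to $\nu_e(x)$, term $A.x$ to $\nu_{\mathsf{last}_A(e)}(x)$ when defined; an atom is false if a term is undefined, otherwise its truth is fixed by the application. $M,e\models\mathsf{Y}\varphi$ iff $\mathsf{last}_{\mathsf{loc}}(e)$ exists and satisfies $\varphi$; $M,e\models @_A\varphi$ iff $\mathsf{last}_A(e)$ exists and satisfies $\varphi$; for $e\in E_A$, $M,e\models\varphi_1\mathbin{\mathsf{S}}\varphi_2$ iff some $f\leq_A e$ in $E_A$ satisfies $\varphi_2$ and all $g\in E_A$ with $f<_A g\leq_A e$ satisfy $\varphi_1$; Booleans as usual. Monitor. $\Phi$ is a finite set of CPL formulas, $\mathsf{sub}(\Phi)$ its subformulas, $\mathsf{Vars}(\Phi)$ the variable names in terms $B.x$. Each lifeline $A$ keeps a vector clock $\mathsf{vc}_A:\mathscr L\to\mathbb N$ (initially all $0$), partial tables $\mathsf{view}_A:\mathscr L\times\mathsf{sub}(\Phi)\rightharpoonup\{0,1\}$ and $\mathsf{var}_A:\mathscr L\times\mathsf{Vars}(\Phi)\rightharpoonup\mathsf{Val}$ (initially empty), a local store $\sigma_A$, and a total map $\mathsf{old}_A:\mathsf{sub}(\Phi)\to\{0,1\}$. Formula evaluation $\mathsf{Eval}_A(\psi,e,\mathsf{old}_A)$: atoms read unqualified variables from $\sigma_A$ and $B.x$ from $\mathsf{var}_A(B,x)$ (missing entry makes the atom false); $\mathsf{Y}\theta\mapsto(\mathsf{vc}_A(A)>1)\wedge\mathsf{old}_A(\theta)$;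 $@_B\theta\mapsto$ $\mathsf{Eval}_A(\theta,\cdot)$ if $B=A$, $0$ if $\mathsf{vc}_A(B)=0$, else $\mathsf{view}_A(B,\theta)$; $\theta_1\mathbin{\mathsf{S}}\theta_2\mapsto\mathsf{Eval}_A(\theta_2,\cdot)\vee(\mathsf{Eval}_A(\theta_1,\cdot)\wedge(\mathsf{vc}_A(A)>1)\wedge\mathsf{old}_A(\theta_1\mathbin{\mathsf{S}}\theta_2))$; Booleans recursively. Event-update procedure for a new event $e$ on $A$: (1) if $e$ is a receive with incoming message $\mu$, then for each $B$ with $\mu.\mathsf{vc}(B)>\mathsf{vc}_A(B)$ copy $\mathsf{view}_A(B,\psi)\gets\mu.\mathsf{view}(B,\psi)$ for all $\psi$ and $\mathsf{var}_A(B,x)\gets\mu.\mathsf{var}(B,x)$ for all $x$; then $\mathsf{vc}_A\gets\max(\mathsf{vc}_A,\mu.\mathsf{vc})$ pointwise. (2) For all $\psi$, $\mathsf{old}_A(\psi)\gets\mathsf{view}_A(A,\psi)$ if defined, else $0$. (3) $\mathsf{vc}_A(A)\gets\mathsf{vc}_A(A)+1$; $\sigma_A\gets\mathsf{effect}(e,\sigma_A)$ (the store after this step induces $\mathsf{val}(e)$); $\mathsf{var}_A(A,x)\gets\sigma_A(x)$ for all $x\in\mathsf{Vars}(\Phi)$. (4) Evaluate all $\psi\in\mathsf{sub}(\Phi)$ bottom-up via $\mathsf{Eval}_A$, then set $\mathsf{view}_A(A,\psi)$ to the results. (5) If $\mathsf{kind}(e)=(\mathsf{send},B)$, send to $B$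 the message (payload, $\mathsf{vc}_A$, $\mathsf{view}_A$, $\mathsf{var}_A$). Used fact (Local evaluation lemma): if before step (4) the state is coherent — i.e. $\mathsf{vc}_A(B)=|\{f\in E_B\mid f\leq_M e\}|$ for all $B$; entries for $B\neq A$ with $k=\mathsf{vc}_A(B)>0$ correctly describe $e^B_k$ and are absent when $\mathsf{vc}_A(B)=0$; $\sigma_A$ and $\mathsf{var}_A(A,\cdot)$ agree with $\mathsf{val}(e)$; $\mathsf{old}_A(\psi)$ is the truth of $\psi$ at the previous local event (false if none) — then $\mathsf{Eval}_A(\psi,e,\mathsf{old}_A)=1$ iff $M,e\models\psi$. *)

theory Defs
  imports Main
begin

datatype 'l kind = Act | Recv | Choice | Send 'l

record ('e, 'l, 'v, 'd) msc =
  ev   :: "'e set"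
  nxt  :: "'e \<Rightarrow> 'e \<Rightarrow> bool"
  msg  :: "'e \<Rightarrow> 'e \<Rightarrow> bool"
  kind :: "'e \<Rightarrow> 'l kind"
  pid  :: "'e \<Rightarrow> 'l"
  val  :: "'e \<Rightarrow> 'v \<Rightarrow> 'd"

definition evs_of :: "('e, 'l, 'v, 'd) msc \<Rightarrow> 'l \<Rightarrow> 'e set" where
  "evs_of M A = {e \<in> ev M. pid M e = A}"

definition wf_msc :: "('e, 'l, 'v, 'd) msc \<Rightarrow> bool" where
  "wf_msc M \<longleftrightarrow>
     finite (ev M)
   \<and> (\<forall>e f. nxt M e f \<longrightarrow> e \<in> ev M \<and> f \<in> ev M \<and> pid M e = pid M f)
   \<and> (\<forall>A. \<exists>r. linear_order_on (evs_of M A) r \<and>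
         (\<forall>e\<in>evs_of M A. \<forall>f\<in>evs_of M A.
            nxt M e f \<longleftrightarrow> ((e, f) \<in> r \<and> e \<noteq> f \<and>
               \<not> (\<exists>g\<in>evs_of M A. (e, g) \<in> r \<and> (g, f) \<in> r \<and> g \<noteq> e \<and> g \<noteq> f))))
   \<and> (\<forall>s r. msg M s r \<longrightarrow> s \<in> ev M \<and> r \<in> ev M \<and> kind M s = Send (pid M r)
                          \<and> kind M r = Recv \<and> pid M s \<noteq> pid M r)
   \<and> (\<forall>r\<in>ev M. kind M r = Recv \<longrightarrow> (\<exists>!s. msg M s r))
   \<and> (\<forall>s r1 r2. msg M s r1 \<longrightarrow> msg M s r2 \<longrightarrow> r1 = r2)
   \<and> acyclic {(e, f). nxt M e f \<or> msg M e f}"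

definition causal_le :: "('e, 'l, 'v, 'd) msc \<Rightarrow> 'e \<Rightarrow> 'e \<Rightarrow> bool" where
  "causal_le M e f \<longleftrightarrow> e \<in> ev M \<and> f \<in> ev M \<and> (e, f) \<in> {(a, b). nxt M a b \<or> msg M a b}\<^sup>*"

definition loc_le :: "('e, 'l, 'v, 'd) msc \<Rightarrow> 'e \<Rightarrow> 'e \<Rightarrow> bool" where
  "loc_le M e f \<longleftrightarrow> e \<in> ev M \<and> f \<in> ev M \<and> pid M e = pid M f \<and> (e, f) \<in> {(a, b). nxt M a b}\<^sup>*"

definition loc_less :: "('e, 'l, 'v, 'd) msc \<Rightarrow> 'e \<Rightarrow> 'e \<Rightarrow> bool" where
  "loc_less M e f \<longleftrightarrow> loc_le M e f \<and> e \<noteq> f"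

definition last_loc :: "('e, 'l, 'v, 'd) msc \<Rightarrow> 'e \<Rightarrow> 'e option" where
  "last_loc M e = (if \<exists>f. loc_less M f e
     then Some (THE f. loc_less M f e \<and> (\<forall>g. loc_less M g e \<longrightarrow> loc_le M g f))
     else None)"

definition last_of :: "('e, 'l, 'v, 'd) msc \<Rightarrow> 'l \<Rightarrow> 'e \<Rightarrow> 'e option" where
  "last_of M B e = (let S = {f \<in> evs_of M B. causal_le M f e} in
     if S = {} then None else Some (THE f. f \<in> S \<and> (\<forall>g\<in>S. loc_le M g f)))"

text \<open>kth M B k = e^B_k, the k-th event of lifeline B (indexing from 1).\<close>
definition kth :: "('e, 'l, 'v, 'd) msc \<Rightarrow> 'l \<Rightarrow> nat \<Rightarrow> 'e" where
  "kth M B k = (THE f. f \<in> evs_of M B \<and> card {g \<in> evs_of M B. loc_le M g f} = k)"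

definition lin_ext :: "('e, 'l, 'v, 'd) msc \<Rightarrow> 'e list \<Rightarrow> bool" where
  "lin_ext M xs \<longleftrightarrow> distinct xs \<and> set xs = ev M \<and>
     (\<forall>i<length xs. \<forall>j<length xs. causal_le M (xs ! i) (xs ! j) \<longrightarrow> i \<le> j)"

datatype ('l, 'v) trm = LVar 'v | RVar 'l 'v

datatype ('l, 'v, 'p) cpl =
    Atom 'p "('l, 'v) trm list"
  | At 'l "('l, 'v, 'p) cpl"
  | Y "('l, 'v, 'p) cpl"
  | Since "('l, 'v, 'p) cpl" "('l, 'v, 'p) cpl"
  | Conj "('l, 'v, 'p) cpl" "('l, 'v, 'p) cpl"
  | Disj "('l, 'v, 'p) cpl" "('l, 'v, 'p) cpl"
  | Neg "('l, 'v, 'p) cpl"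

fun teval :: "('e, 'l, 'v, 'd) msc \<Rightarrow> 'e \<Rightarrow> ('l, 'v) trm \<Rightarrow> 'd option" where
  "teval M e (LVar x) = Some (val M e x)"
| "teval M e (RVar B x) = map_option (\<lambda>f. val M f x) (last_of M B e)"

primrec sat :: "('e, 'l, 'v, 'd) msc \<Rightarrow> ('p \<Rightarrow> 'd list \<Rightarrow> bool) \<Rightarrow> 'e \<Rightarrow> ('l, 'v, 'p) cpl \<Rightarrow> bool" where
  "sat M I e (Atom p ts) = (case those (map (teval M e) ts) of None \<Rightarrow> False | Some ds \<Rightarrow> I p ds)"
| "sat M I e (At B \<phi>) = (case last_of M B e of None \<Rightarrow> False | Some f \<Rightarrow> sat M I f \<phi>)"
| "sat M I e (Y \<phi>) = (case last_loc M e of None \<Rightarrow> False | Some f \<Rightarrow> sat M I f \<phi>)"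
| "sat M I e (Since \<phi>1 \<phi>2) = (\<exists>f. loc_le M f e \<and> sat M I f \<phi>2 \<and>
       (\<forall>g. loc_less M f g \<and> loc_le M g e \<longrightarrow> sat M I g \<phi>1))"
| "sat M I e (Conj \<phi>1 \<phi>2) = (sat M I e \<phi>1 \<and> sat M I e \<phi>2)"
| "sat M I e (Disj \<phi>1 \<phi>2) = (sat M I e \<phi>1 \<or> sat M I e \<phi>2)"
| "sat M I e (Neg \<phi>) = (\<not> sat M I e \<phi>)"

primrec subf :: "('l, 'v, 'p) cpl \<Rightarrow> ('l, 'v, 'p) cpl set" where
  "subf (Atom p ts) = {Atom p ts}"
| "subf (At B \<phi>) = insert (At B \<phi>) (subf \<phi>)"
| "subf (Y \<phi>) = insert (Y \<phi>) (subf \<phi>)"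
| "subf (Since \<phi>1 \<phi>2) = insert (Since \<phi>1 \<phi>2) (subf \<phi>1 \<union> subf \<phi>2)"
| "subf (Conj \<phi>1 \<phi>2) = insert (Conj \<phi>1 \<phi>2) (subf \<phi>1 \<union> subf \<phi>2)"
| "subf (Disj \<phi>1 \<phi>2) = insert (Disj \<phi>1 \<phi>2) (subf \<phi>1 \<union> subf \<phi>2)"
| "subf (Neg \<phi>) = insert (Neg \<phi>) (subf \<phi>)"

definition sub :: "('l, 'v, 'p) cpl set \<Rightarrow> ('l, 'v, 'p) cpl set" where
  "sub \<Phi> = (\<Union>\<phi>\<in>\<Phi>. subf \<phi>)"

fun rvars_t :: "('l, 'v) trm \<Rightarrow> 'v set" where
  "rvars_t (LVar x) = {}"
| "rvars_t (RVar B x) = {x}"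

primrec rvars :: "('l, 'v, 'p) cpl \<Rightarrow> 'v set" where
  "rvars (Atom p ts) = (\<Union>t\<in>set ts. rvars_t t)"
| "rvars (At B \<phi>) = rvars \<phi>"
| "rvars (Y \<phi>) = rvars \<phi>"
| "rvars (Since \<phi>1 \<phi>2) = rvars \<phi>1 \<union> rvars \<phi>2"
| "rvars (Conj \<phi>1 \<phi>2) = rvars \<phi>1 \<union> rvars \<phi>2"
| "rvars (Disj \<phi>1 \<phi>2) = rvars \<phi>1 \<union> rvars \<phi>2"
| "rvars (Neg \<phi>) = rvars \<phi>"

definition Vars :: "('l, 'v, 'p) cpl set \<Rightarrow> 'v set" where
  "Vars \<Phi> = (\<Union>\<phi>\<in>\<Phi>. rvars \<phi>)"

record ('l, 'v, 'd, 'p) lstate =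
  vc    :: "'l \<Rightarrow> nat"
  view  :: "'l \<times> ('l, 'v, 'p) cpl \<Rightarrow> bool option"
  var   :: "'l \<times> 'v \<Rightarrow> 'd option"
  store :: "'v \<Rightarrow> 'd"
  old   :: "('l, 'v, 'p) cpl \<Rightarrow> bool"

record ('l, 'v, 'd, 'p) message =
  mvc   :: "'l \<Rightarrow> nat"
  mview :: "'l \<times> ('l, 'v, 'p) cpl \<Rightarrow> bool option"
  mvar  :: "'l \<times> 'v \<Rightarrow> 'd option"

fun ateval :: "('l, 'v, 'd, 'p) lstate \<Rightarrow> ('l, 'v) trm \<Rightarrow> 'd option" where
  "ateval s (LVar x) = Some (store s x)"
| "ateval s (RVar B x) = var s (B, x)"

primrec Eval :: "('p \<Rightarrow> 'd list \<Rightarrow> bool) \<Rightarrow> 'l \<Rightarrow> ('l, 'v, 'd, 'p) lstate \<Rightarrow> ('l, 'v, 'p) cpl \<Rightarrow> bool" where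
  "Eval I A s (Atom p ts) = (case those (map (ateval s) ts) of None \<Rightarrow> False | Some ds \<Rightarrow> I p ds)"
| "Eval I A s (Y \<theta>) = (vc s A > 1 \<and> old s \<theta>)"
| "Eval I A s (At B \<theta>) = (if B = A then Eval I A s \<theta>
                          else if vc s B = 0 then False else view s (B, \<theta>) = Some True)"
| "Eval I A s (Since \<theta>1 \<theta>2) = (Eval I A s \<theta>2 \<or> (Eval I A s \<theta>1 \<and> vc s A > 1 \<and> old s (Since \<theta>1 \<theta>2)))"
| "Eval I A s (Conj \<theta>1 \<theta>2) = (Eval I A s \<theta>1 \<and> Eval I A s \<theta>2)"
| "Eval I A s (Disj \<theta>1 \<theta>2) = (Eval I A s \<theta>1 \<or> Eval I A s \<theta>2)"
| "Eval I A s (Neg \<theta>) = (\<not> Eval I A s \<theta>)"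

text \<open>Step (1): merge an incoming message.\<close>
definition recv_update :: "('l, 'v, 'd, 'p) message \<Rightarrow> ('l, 'v, 'd, 'p) lstate \<Rightarrow> ('l, 'v, 'd, 'p) lstate" where
  "recv_update \<mu> s =
     s\<lparr> view := (\<lambda>(B, \<psi>). if mvc \<mu> B > vc s B then mview \<mu> (B, \<psi>) else view s (B, \<psi>)),
        var  := (\<lambda>(B, x). if mvc \<mu> B > vc s B then mvar \<mu> (B, x) else var s (B, x)),
        vc   := (\<lambda>B. max (vc s B) (mvc \<mu> B)) \<rparr>"

text \<open>Steps (2)-(4) on lifeline A for event e.\<close>
definition local_step ::
  "('l, 'v, 'p) cpl set \<Rightarrow> ('p \<Rightarrow> 'd list \<Rightarrow> bool) \<Rightarrow> ('e \<Rightarrow> ('v \<Rightarrow> 'd) \<Rightarrow> ('v \<Rightarrow> 'd))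
   \<Rightarrow> 'l \<Rightarrow> 'e \<Rightarrow> ('l, 'v, 'd, 'p) lstate \<Rightarrow> ('l, 'v, 'd, 'p) lstate" where
  "local_step \<Phi> I eff A e s1 = (let
     s2 = s1\<lparr> old := (\<lambda>\<psi>. view s1 (A, \<psi>) = Some True) \<rparr>;
     \<sigma>' = eff e (store s2);
     s3 = s2\<lparr> vc := (vc s2)(A := Suc (vc s2 A)), store := \<sigma>',
              var := (\<lambda>(B, x). if B = A \<and> x \<in> Vars \<Phi> then Some (\<sigma>' x) else var s2 (B, x)) \<rparr>
   in s3\<lparr> view := (\<lambda>(B, \<psi>). if B = A \<and> \<psi> \<in> sub \<Phi> then Some (Eval I A s3 \<psi>) else view s3 (B, \<psi>)) \<rparr>)"

text \<open>Global state: the local state of every lifeline's monitor, and the messages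
  emitted at send events (indexed by the send event).\<close>
type_synonym ('e, 'l, 'v, 'd, 'p) gstate =
  "('l \<Rightarrow> ('l, 'v, 'd, 'p) lstate) \<times> ('e \<Rightarrow> ('l, 'v, 'd, 'p) message option)"

definition gstep ::
  "('e, 'l, 'v, 'd) msc \<Rightarrow> ('l, 'v, 'p) cpl set \<Rightarrow> ('p \<Rightarrow> 'd list \<Rightarrow> bool)
   \<Rightarrow> ('e \<Rightarrow> ('v \<Rightarrow> 'd) \<Rightarrow> ('v \<Rightarrow> 'd)) \<Rightarrow> ('e, 'l, 'v, 'd, 'p) gstate \<Rightarrow> 'e \<Rightarrow> ('e, 'l, 'v, 'd, 'p) gstate" where
  "gstep M \<Phi> I eff g e = (let
     L = fst g; mb = snd g;
     A = pid M e;
     s1 = (if kind M e = Recv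
           then (case mb (THE s. msg M s e) of Some \<mu> \<Rightarrow> recv_update \<mu> (L A) | None \<Rightarrow> L A)
           else L A);
     s = local_step \<Phi> I eff A e s1;
     mb' = (case kind M e of
              Send B \<Rightarrow> mb(e := Some \<lparr> mvc = vc s, mview = view s, mvar = var s \<rparr>)
            | _ \<Rightarrow> mb)
   in (L(A := s), mb'))"

definition init_state :: "('l \<Rightarrow> ('v \<Rightarrow> 'd)) \<Rightarrow> ('e, 'l, 'v, 'd, 'p) gstate" where
  "init_state \<sigma>0 = ((\<lambda>A. \<lparr> vc = (\<lambda>_. 0), view = (\<lambda>_. None), var = (\<lambda>_. None),
                            store = \<sigma>0 A, old = (\<lambda>_. False) \<rparr>), (\<lambda>_. None))"

definition run ::
  "('e, 'l, 'v, 'd) msc \<Rightarrow> ('l, 'v, 'p) cpl set \<Rightarrow> ('p \<Rightarrow> 'd list \<Rightarrow> bool)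
   \<Rightarrow> ('e \<Rightarrow> ('v \<Rightarrow> 'd) \<Rightarrow> ('v \<Rightarrow> 'd)) \<Rightarrow> ('l \<Rightarrow> ('v \<Rightarrow> 'd)) \<Rightarrow> 'e list \<Rightarrow> ('e, 'l, 'v, 'd, 'p) gstate" where
  "run M \<Phi> I eff \<sigma>0 xs = foldl (gstep M \<Phi> I eff) (init_state \<sigma>0) xs"

definition val_induced :: "('e, 'l, 'v, 'd) msc \<Rightarrow> ('e \<Rightarrow> ('v \<Rightarrow> 'd) \<Rightarrow> ('v \<Rightarrow> 'd)) \<Rightarrow> ('l \<Rightarrow> ('v \<Rightarrow> 'd)) \<Rightarrow> bool" where
  "val_induced M eff \<sigma>0 \<longleftrightarrow> (\<forall>e\<in>ev M. val M e =
     eff e (case last_loc M e of None \<Rightarrow> \<sigma>0 (pid M e) | Some f \<Rightarrow> val M f))"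

end

theory Submission
  imports Defs
begin

text \<open>
  The proof is an induction along the linear extension. The invariant says that the monitor of
  every lifeline is coherent with the last event of that lifeline processed so far, and that every
  processed send event has emitted a message coherent with it, where coherent means that the
  vector clock counts the causal past and that the tables describe the events \<open>e\<^sup>B\<^sub>k\<close> it
  points to.

  On each lifeline the causal past of an event is a down-closed prefix of the local order, so it
  is determined by its cardinality, which is why the \<open>k\<close>-th event is the right one to describe.
  The strict causal past of \<open>e\<close> is the union of the causal pasts of its local predecessor and,
  for a receive, of its sender; two prefixes of a chain are nested, so the cardinality of their
  union is the maximum, which is exactly the pointwise maximum taken by the merge of step (1).
  Once the state is coherent with this strict past, evaluating the subformulas bottom-up yields
  their truth values at \<open>e\<close>, the only non-local ingredient being the recursive unfolding of
  \<open>Since\<close> through the local predecessor.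
\<close>

section \<open>Subformulas\<close>

lemma subf_refl: "\<psi> \<in> subf \<psi>"
  by (cases \<psi>) auto

lemma subf_trans: "\<chi> \<in> subf \<psi> \<Longrightarrow> subf \<chi> \<subseteq> subf \<psi>"
  by (induction \<psi>) auto

lemma sub_subf_closed: "\<psi> \<in> sub \<Phi> \<Longrightarrow> \<chi> \<in> subf \<psi> \<Longrightarrow> \<chi> \<in> sub \<Phi>"
  unfolding sub_def using subf_trans by blast

lemma rvars_subf_mono: "\<chi> \<in> subf \<psi> \<Longrightarrow> rvars \<chi> \<subseteq> rvars \<psi>"
  by (induction \<psi>) auto

lemma RVar_of_sub_in_Vars:
  assumes "Atom p ts \<in> sub \<Phi>" and "RVar B x \<in> set ts"
  shows "x \<in> Vars \<Phi>"
proof -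
  obtain \<phi> where "\<phi> \<in> \<Phi>" "Atom p ts \<in> subf \<phi>"
    using assms(1) unfolding sub_def by blast
  moreover have "x \<in> rvars (Atom p ts)"
    using assms(2) by force
  ultimately show ?thesis
    using rvars_subf_mono unfolding Vars_def by blast
qed

section \<open>Local orders of a message sequence chart\<close>

lemma linear_order_on_rtrancl_covers:
  assumes fin: "finite S" and lin: "linear_order_on S r"
    and cover: "\<forall>a\<in>S. \<forall>b\<in>S. R a b \<longleftrightarrow>
      (a, b) \<in> r \<and> a \<noteq> b \<and> \<not> (\<exists>c\<in>S. (a, c) \<in> r \<and> (c, b) \<in> r \<and> c \<noteq> a \<and> c \<noteq> b)"
    and ab: "(a, b) \<in> r" "a \<in> S" "b \<in> S"
  shows "(a, b) \<in> {(x, y). R x y}\<^sup>*"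
  using ab
proof (induction "card {c \<in> S. (a, c) \<in> r \<and> (c, b) \<in> r}" arbitrary: a b rule: less_induct)
  case less
  have tr: "trans r" and an: "antisym r" and rf: "refl_on S r"
    using lin unfolding linear_order_on_def partial_order_on_def preorder_on_def by auto
  show ?case
  proof (cases "a = b \<or> R a b")
    case True
    then show ?thesis by auto
  next
    case False
    then obtain c where c: "c \<in> S" "(a, c) \<in> r" "(c, b) \<in> r" "c \<noteq> a" "c \<noteq> b"
      using cover less.prems by blast
    let ?between = "\<lambda>a b. {c \<in> S. (a, c) \<in> r \<and> (c, b) \<in> r}"
    have "?between a c \<subset> ?between a b"
      using c less.prems tr an rf by (auto dest: transD antisymD simp: refl_on_def)
    then have "card (?between a c) < card (?between a b)"
      using fin by (intro psubset_card_mono) auto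
    then have "(a, c) \<in> {(x, y). R x y}\<^sup>*"
      using less.hyps less.prems c by blast
    moreover have "?between c b \<subset> ?between a b"
      using c less.prems tr an rf by (auto dest: transD antisymD simp: refl_on_def)
    then have "card (?between c b) < card (?between a b)"
      using fin by (intro psubset_card_mono) auto
    then have "(c, b) \<in> {(x, y). R x y}\<^sup>*"
      using less.hyps less.prems c by blast
    ultimately show ?thesis
      by (rule rtrancl_trans)
  qed
qed

text \<open>Meaningful only for receive events \<open>r\<close>; it is the send event that \<^const>\<open>gstep\<close> looks up.\<close>

abbreviation sender :: "('e, 'l, 'v, 'd) msc \<Rightarrow> 'e \<Rightarrow> 'e" where
  "sender M r \<equiv> THE s. msg M s r"

definition causal_past :: "('e, 'l, 'v, 'd) msc \<Rightarrow> 'e \<Rightarrow> 'l \<Rightarrow> 'e set" where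
  "causal_past M e B = {f \<in> evs_of M B. causal_le M f e}"

definition causal_past_opt :: "('e, 'l, 'v, 'd) msc \<Rightarrow> 'e option \<Rightarrow> 'l \<Rightarrow> 'e set" where
  "causal_past_opt M p B = (case p of None \<Rightarrow> {} | Some f \<Rightarrow> causal_past M f B)"

definition down_closed :: "('e, 'l, 'v, 'd) msc \<Rightarrow> 'l \<Rightarrow> 'e set \<Rightarrow> bool" where
  "down_closed M B S \<longleftrightarrow> S \<subseteq> evs_of M B \<and> (\<forall>f\<in>S. \<forall>g\<in>evs_of M B. loc_le M g f \<longrightarrow> g \<in> S)"

definition loc_max :: "('e, 'l, 'v, 'd) msc \<Rightarrow> 'e set \<Rightarrow> 'e option" where
  "loc_max M S = (if S = {} then None else Some (THE f. f \<in> S \<and> (\<forall>g\<in>S. loc_le M g f)))"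

lemma last_of_eq_loc_max: "last_of M B e = loc_max M (causal_past M e B)"
  unfolding last_of_def loc_max_def causal_past_def Let_def by simp

lemma last_loc_eq_loc_max: "last_loc M e = loc_max M {f. loc_less M f e}"
  unfolding last_loc_def loc_max_def by simp

locale well_formed_msc =
  fixes M :: "('e, 'l, 'v, 'd) msc"
  assumes wf: "wf_msc M"
begin

lemma finite_evs_of: "finite (evs_of M B)"
  using wf unfolding wf_msc_def evs_of_def by simp

lemma nxtD: "nxt M e f \<Longrightarrow> e \<in> ev M \<and> f \<in> ev M \<and> pid M e = pid M f"
  using wf unfolding wf_msc_def by blast

lemma msgD: "msg M s r \<Longrightarrow> s \<in> ev M \<and> r \<in> ev M \<and> kind M s = Send (pid M r)
    \<and> kind M r = Recv \<and> pid M s \<noteq> pid M r"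
  using wf unfolding wf_msc_def by blast

lemma ex1_sender: "r \<in> ev M \<Longrightarrow> kind M r = Recv \<Longrightarrow> \<exists>!s. msg M s r"
  using wf unfolding wf_msc_def by blast

lemma msg_sender: "r \<in> ev M \<Longrightarrow> kind M r = Recv \<Longrightarrow> msg M (sender M r) r"
  using ex1_sender by (rule theI')

lemma causal_le_ev: "causal_le M e f \<Longrightarrow> e \<in> ev M \<and> f \<in> ev M"
  unfolding causal_le_def by blast

lemma causal_le_refl: "e \<in> ev M \<Longrightarrow> causal_le M e e"
  unfolding causal_le_def by blast

lemma causal_le_trans: "causal_le M e f \<Longrightarrow> causal_le M f g \<Longrightarrow> causal_le M e g"
  unfolding causal_le_def by (meson rtrancl_trans)

lemma msg_imp_causal_le: "msg M s r \<Longrightarrow> causal_le M s r"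
  unfolding causal_le_def using msgD by blast

lemma causal_le_antisym: "causal_le M e f \<Longrightarrow> causal_le M f e \<Longrightarrow> e = f"
proof (rule ccontr)
  let ?R = "{(a, b). nxt M a b \<or> msg M a b}"
  assume "causal_le M e f" "causal_le M f e" "e \<noteq> f"
  then have "(e, f) \<in> ?R\<^sup>+" "(f, e) \<in> ?R\<^sup>*"
    unfolding causal_le_def by (auto simp: rtrancl_eq_or_trancl)
  then have "(e, e) \<in> ?R\<^sup>+"
    by (rule trancl_rtrancl_trancl)
  then show False
    using wf unfolding wf_msc_def acyclic_def by blast
qed

lemma nxt_irrefl: "\<not> nxt M e e"
  using wf unfolding wf_msc_def acyclic_def by blast

lemma loc_leD: "loc_le M e f \<Longrightarrow> e \<in> ev M \<and> f \<in> ev M \<and> pid M e = pid M f"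
  unfolding loc_le_def by blast

lemma loc_le_refl: "e \<in> ev M \<Longrightarrow> loc_le M e e"
  unfolding loc_le_def by blast

lemma loc_le_trans: "loc_le M e f \<Longrightarrow> loc_le M f g \<Longrightarrow> loc_le M e g"
  unfolding loc_le_def by (auto intro: rtrancl_trans)

lemma loc_le_imp_causal_le: "loc_le M e f \<Longrightarrow> causal_le M e f"
proof -
  have "{(a, b). nxt M a b}\<^sup>* \<subseteq> {(a, b). nxt M a b \<or> msg M a b}\<^sup>*"
    by (rule rtrancl_mono) blast
  then show "loc_le M e f \<Longrightarrow> causal_le M e f"
    unfolding loc_le_def causal_le_def by blast
qed

lemma loc_le_antisym: "loc_le M e f \<Longrightarrow> loc_le M f e \<Longrightarrow> e = f"
  using causal_le_antisym loc_le_imp_causal_le by blast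

lemma nxt_imp_loc_less: "nxt M e f \<Longrightarrow> loc_less M e f"
  unfolding loc_less_def loc_le_def using nxtD nxt_irrefl by (auto intro: r_into_rtrancl)

lemma loc_le_total:
  assumes "e \<in> evs_of M A" "f \<in> evs_of M A"
  shows "loc_le M e f \<or> loc_le M f e"
proof -
  obtain r where lin: "linear_order_on (evs_of M A) r"
    and cover: "\<forall>a\<in>evs_of M A. \<forall>b\<in>evs_of M A. nxt M a b \<longleftrightarrow> (a, b) \<in> r \<and> a \<noteq> b
      \<and> \<not> (\<exists>c\<in>evs_of M A. (a, c) \<in> r \<and> (c, b) \<in> r \<and> c \<noteq> a \<and> c \<noteq> b)"
    using wf unfolding wf_msc_def by blast
  have "(e, f) \<in> r \<or> (f, e) \<in> r"
    using lin assms unfolding linear_order_on_def partial_order_on_def preorder_on_def total_on_def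
    by (metis refl_onD)
  then have "(e, f) \<in> {(a, b). nxt M a b}\<^sup>* \<or> (f, e) \<in> {(a, b). nxt M a b}\<^sup>*"
    using linear_order_on_rtrancl_covers[OF finite_evs_of lin cover] assms by blast
  then show ?thesis
    using assms unfolding loc_le_def evs_of_def by auto
qed

lemma causal_le_same_lifeline:
  assumes "causal_le M f e" "pid M f = pid M e"
  shows "loc_le M f e"
proof -
  have "f \<in> evs_of M (pid M e)" "e \<in> evs_of M (pid M e)"
    using assms causal_le_ev unfolding evs_of_def by auto
  then have "loc_le M f e \<or> loc_le M e f"
    by (rule loc_le_total)
  then show ?thesis
    using assms(1) causal_le_antisym loc_le_imp_causal_le by blast
qed

section \<open>Causal pasts as prefixes of the local orders\<close>

lemma card_downset_strict_mono:
  assumes "loc_less M f g" "g \<in> evs_of M B"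
  shows "card {h \<in> evs_of M B. loc_le M h f} < card {h \<in> evs_of M B. loc_le M h g}"
proof (rule psubset_card_mono)
  show "finite {h \<in> evs_of M B. loc_le M h g}"
    using finite_evs_of by simp
  have "g \<notin> {h \<in> evs_of M B. loc_le M h f}"
    using assms loc_le_antisym unfolding loc_less_def by blast
  moreover have "g \<in> {h \<in> evs_of M B. loc_le M h g}"
    using assms loc_le_refl unfolding evs_of_def by auto
  moreover have "{h \<in> evs_of M B. loc_le M h f} \<subseteq> {h \<in> evs_of M B. loc_le M h g}"
    using assms(1) loc_le_trans unfolding loc_less_def by blast
  ultimately show "{h \<in> evs_of M B. loc_le M h f} \<subset> {h \<in> evs_of M B. loc_le M h g}"
    by blast
qed

lemma kth_card_downset:
  assumes m: "m \<in> evs_of M B"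
  shows "kth M B (card {g \<in> evs_of M B. loc_le M g m}) = m"
  unfolding kth_def
proof (rule the_equality)
  fix f
  assume f: "f \<in> evs_of M B \<and> card {g \<in> evs_of M B. loc_le M g f} = card {g \<in> evs_of M B. loc_le M g m}"
  show "f = m"
  proof (rule ccontr)
    assume "f \<noteq> m"
    then consider "loc_less M f m" | "loc_less M m f"
      using loc_le_total f m unfolding loc_less_def by blast
    then show False
    proof cases
      case 1
      then show False
        using card_downset_strict_mono[OF 1 m] f by simp
    next
      case 2
      then show False
        using card_downset_strict_mono[of m f B] f by simp
    qed
  qed
qed (use m in simp)

lemma down_closed_eq_downset:
  assumes "down_closed M B S" "m \<in> S" "\<forall>g\<in>S. loc_le M g m"
  shows "S = {g \<in> evs_of M B. loc_le M g m}"
proof (intro equalityI subsetI)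
  fix f
  assume "f \<in> S"
  then show "f \<in> {g \<in> evs_of M B. loc_le M g m}"
    using assms(1,3) unfolding down_closed_def by blast
next
  fix f
  assume "f \<in> {g \<in> evs_of M B. loc_le M g m}"
  then show "f \<in> S"
    using assms(1,2) unfolding down_closed_def by blast
qed

lemma kth_card_down_closed:
  assumes "down_closed M B S" "m \<in> S" "\<forall>g\<in>S. loc_le M g m"
  shows "kth M B (card S) = m"
proof -
  have "S = {g \<in> evs_of M B. loc_le M g m}"
    using assms by (rule down_closed_eq_downset)
  moreover have "m \<in> evs_of M B"
    using assms unfolding down_closed_def by blast
  ultimately show ?thesis
    using kth_card_downset by simp
qed

lemma loc_max_exists:
  assumes "S \<subseteq> evs_of M B" "S \<noteq> {}"
  shows "\<exists>m\<in>S. \<forall>g\<in>S. loc_le M g m"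
proof -
  have "finite S"
    using assms(1) finite_evs_of by (rule finite_subset)
  from this \<open>S \<noteq> {}\<close> \<open>S \<subseteq> evs_of M B\<close> show ?thesis
  proof (induction rule: finite_ne_induct)
    case (singleton x)
    then show ?case
      using loc_le_refl unfolding evs_of_def by auto
  next
    case (insert x F)
    then obtain m where m: "m \<in> F" "\<forall>g\<in>F. loc_le M g m"
      by auto
    have x: "x \<in> evs_of M B" and "m \<in> evs_of M B"
      using insert.prems m(1) by auto
    then consider "loc_le M x m" | "loc_le M m x"
      using loc_le_total by blast
    then show ?case
    proof cases
      case 1
      then show ?thesis
        using m by blast
    next
      case 2
      then have "\<forall>g\<in>F. loc_le M g x"
        using m(2) loc_le_trans by blast
      moreover have "loc_le M x x"
        using x loc_le_refl unfolding evs_of_def by blast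
      ultimately show ?thesis
        by blast
    qed
  qed
qed

lemma loc_max_eqI:
  assumes "m \<in> S" "\<forall>g\<in>S. loc_le M g m"
  shows "loc_max M S = Some m"
proof -
  have "(THE f. f \<in> S \<and> (\<forall>g\<in>S. loc_le M g f)) = m"
    using assms loc_le_antisym by (intro the_equality) blast+
  then show ?thesis
    using assms unfolding loc_max_def by auto
qed

lemma loc_max_down_closed:
  assumes "down_closed M B S"
  shows "loc_max M S = (if card S = 0 then None else Some (kth M B (card S)))"
proof (cases "S = {}")
  case True
  then show ?thesis
    unfolding loc_max_def by simp
next
  case False
  have sub: "S \<subseteq> evs_of M B"
    using assms unfolding down_closed_def by blast
  then have "card S \<noteq> 0"
    using False finite_evs_of finite_subset by fastforce
  moreover obtain m where "m \<in> S" "\<forall>g\<in>S. loc_le M g m"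
    using loc_max_exists[OF sub False] by blast
  moreover note loc_max_eqI kth_card_down_closed[OF assms]
  ultimately show ?thesis
    by presburger
qed

lemma down_closed_card_Un:
  assumes "down_closed M B S" "down_closed M B T"
  shows "card (S \<union> T) = max (card S) (card T)"
proof -
  have "S \<subseteq> T \<or> T \<subseteq> S"
  proof (rule ccontr)
    assume "\<not> (S \<subseteq> T \<or> T \<subseteq> S)"
    then obtain x y where xy: "x \<in> S" "x \<notin> T" "y \<in> T" "y \<notin> S"
      by blast
    then have "x \<in> evs_of M B" "y \<in> evs_of M B"
      using assms unfolding down_closed_def by blast+
    then have "loc_le M x y \<or> loc_le M y x"
      by (rule loc_le_total)
    then show False
      using xy assms \<open>x \<in> evs_of M B\<close> \<open>y \<in> evs_of M B\<close> unfolding down_closed_def by blast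
  qed
  moreover have "finite S" "finite T"
    using assms finite_evs_of finite_subset unfolding down_closed_def by blast+
  ultimately show ?thesis
    by (metis card_mono max.absorb1 max.absorb2 sup.absorb1 sup.absorb2)
qed

lemma down_closed_causal_past: "down_closed M B (causal_past M e B)"
  unfolding down_closed_def causal_past_def by (blast intro: causal_le_trans loc_le_imp_causal_le)

lemma down_closed_loc_less: "down_closed M (pid M e) {f. loc_less M f e}"
proof -
  have "{f. loc_less M f e} \<subseteq> evs_of M (pid M e)"
    unfolding loc_less_def evs_of_def by (auto dest: loc_leD)
  moreover have "loc_less M g e" if "loc_less M f e" "loc_le M g f" for f g
    using that loc_le_antisym loc_le_trans unfolding loc_less_def by metis
  ultimately show ?thesis
    unfolding down_closed_def by blast
qed

lemma last_of_eq_kth: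
  "last_of M B e = (if card (causal_past M e B) = 0 then None else Some (kth M B (card (causal_past M e B))))"
  unfolding last_of_eq_loc_max by (rule loc_max_down_closed[OF down_closed_causal_past])

lemma last_loc_eq_kth:
  "last_loc M e = (if card {f. loc_less M f e} = 0 then None
     else Some (kth M (pid M e) (card {f. loc_less M f e})))"
  unfolding last_loc_eq_loc_max by (rule loc_max_down_closed[OF down_closed_loc_less])

lemma last_loc_cases:
  obtains "last_loc M e = None" "\<forall>f. \<not> loc_less M f e"
  | p where "last_loc M e = Some p" "loc_less M p e" "\<forall>g. loc_less M g e \<longrightarrow> loc_le M g p"
proof (cases "{f. loc_less M f e} = {}")
  case True
  then have "last_loc M e = None"
    unfolding last_loc_eq_loc_max loc_max_def by simp
  moreover have "\<forall>f. \<not> loc_less M f e"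
    using True by blast
  ultimately show ?thesis
    by (rule that(1))
next
  case False
  have "{f. loc_less M f e} \<subseteq> evs_of M (pid M e)"
    using down_closed_loc_less unfolding down_closed_def by (rule conjunct1)
  then obtain p where p: "p \<in> {f. loc_less M f e}" "\<forall>g\<in>{f. loc_less M f e}. loc_le M g p"
    using loc_max_exists False by blast
  then have "last_loc M e = Some p"
    unfolding last_loc_eq_loc_max by (rule loc_max_eqI)
  moreover have "loc_less M p e" "\<forall>g. loc_less M g e \<longrightarrow> loc_le M g p"
    using p by auto
  ultimately show ?thesis
    by (rule that(2))
qed

lemma causal_past_own_lifeline:
  assumes "e \<in> ev M"
  shows "causal_past M e (pid M e) = insert e {f. loc_less M f e}"
proof (intro equalityI subsetI)
  fix f
  assume "f \<in> causal_past M e (pid M e)"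
  then show "f \<in> insert e {f. loc_less M f e}"
    using causal_le_same_lifeline unfolding causal_past_def loc_less_def evs_of_def by auto
next
  fix f
  assume "f \<in> insert e {f. loc_less M f e}"
  then show "f \<in> causal_past M e (pid M e)"
    using assms causal_le_refl loc_le_imp_causal_le unfolding causal_past_def loc_less_def evs_of_def
    by (auto dest: loc_leD)
qed

lemma card_causal_past_own_lifeline:
  assumes "e \<in> ev M"
  shows "card (causal_past M e (pid M e)) = Suc (card {f. loc_less M f e})"
proof -
  have "finite {f. loc_less M f e}"
    using down_closed_loc_less finite_evs_of finite_subset unfolding down_closed_def by blast
  then show ?thesis
    using causal_past_own_lifeline[OF assms] unfolding loc_less_def by simp
qed

lemma kth_card_causal_past_own_lifeline:
  assumes "e \<in> ev M"
  shows "kth M (pid M e) (card (causal_past M e (pid M e))) = e"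
proof (rule kth_card_down_closed[OF down_closed_causal_past])
  show "e \<in> causal_past M e (pid M e)" "\<forall>g\<in>causal_past M e (pid M e). loc_le M g e"
    using assms causal_past_own_lifeline loc_le_refl unfolding loc_less_def by auto
qed

lemma last_of_own_lifeline: "e \<in> ev M \<Longrightarrow> last_of M (pid M e) e = Some e"
  using last_of_eq_kth kth_card_causal_past_own_lifeline card_causal_past_own_lifeline by simp

lemma one_less_card_causal_past_own_lifeline:
  "e \<in> ev M \<Longrightarrow> 1 < card (causal_past M e (pid M e)) \<longleftrightarrow> last_loc M e \<noteq> None"
  using card_causal_past_own_lifeline last_loc_eq_kth[of e] by simp

lemma sender_eqI:
  assumes "msg M s r"
  shows "sender M r = s"
proof -
  have "r \<in> ev M" "kind M r = Recv"
    using msgD[OF assms] by auto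
  then have "\<exists>!s. msg M s r"
    by (rule ex1_sender)
  then show ?thesis
    using assms by (rule the1_equality)
qed

lemma causal_past_opt_down_closed: "down_closed M B (causal_past_opt M p B)"
  unfolding causal_past_opt_def down_closed_def
  using down_closed_causal_past unfolding down_closed_def by (auto split: option.split)

lemma loc_le_iff_last_loc:
  assumes "e \<in> ev M"
  shows "loc_le M g e \<longleftrightarrow> g = e \<or> (case last_loc M e of None \<Rightarrow> False | Some p \<Rightarrow> loc_le M g p)"
proof (cases rule: last_loc_cases[of e])
  case 1
  then show ?thesis
    using assms loc_le_refl unfolding loc_less_def by auto
next
  case (2 p)
  then show ?thesis
    using assms loc_le_refl loc_le_trans unfolding loc_less_def by auto
qed

lemma causal_le_last_step:
  assumes "causal_le M f e" "f \<noteq> e"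
  obtains g where "causal_le M f g" "nxt M g e \<or> msg M g e"
proof -
  have "(f, e) \<in> {(a, b). nxt M a b \<or> msg M a b}\<^sup>*"
    using assms(1) unfolding causal_le_def by blast
  then obtain g where fg: "(f, g) \<in> {(a, b). nxt M a b \<or> msg M a b}\<^sup>*"
    and ge: "nxt M g e \<or> msg M g e"
    using assms(2) by (metis (no_types, lifting) case_prodD mem_Collect_eq rtranclE)
  have "g \<in> ev M"
    using ge nxtD msgD by blast
  then have "causal_le M f g"
    using fg assms(1) unfolding causal_le_def by blast
  then show thesis
    using ge by (rule that)
qed

lemma causal_past_subset_minus_self:
  assumes "causal_le M h e" "h \<noteq> e"
  shows "causal_past M h B \<subseteq> causal_past M e B - {e}"
  using assms causal_le_trans causal_le_antisym unfolding causal_past_def by blast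

lemma causal_past_minus_self:
  assumes e: "e \<in> ev M"
  shows "causal_past M e B - {e} = causal_past_opt M (last_loc M e) B
    \<union> (if kind M e = Recv then causal_past M (sender M e) B else {})"
    (is "_ = ?local \<union> ?remote")
proof (intro equalityI subsetI)
  fix f
  assume f: "f \<in> causal_past M e B - {e}"
  then obtain g where fg: "causal_le M f g" and "nxt M g e \<or> msg M g e"
    using causal_le_last_step unfolding causal_past_def by blast
  then consider "nxt M g e" | "msg M g e"
    by blast
  then show "f \<in> ?local \<union> ?remote"
  proof cases
    case 1
    then have "loc_le M g e" "g \<noteq> e"
      using nxt_imp_loc_less unfolding loc_less_def by auto
    then obtain p where "last_loc M e = Some p" "loc_le M g p"
      using loc_le_iff_last_loc[OF e] by (auto split: option.splits)
    then show ?thesis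
      using fg f causal_le_trans loc_le_imp_causal_le
      unfolding causal_past_opt_def causal_past_def by auto
  next
    case 2
    then show ?thesis
      using fg f sender_eqI msgD unfolding causal_past_def by auto
  qed
next
  have "?local \<subseteq> causal_past M e B - {e}"
  proof (cases rule: last_loc_cases[of e])
    case (2 p)
    then show ?thesis
      using causal_past_subset_minus_self loc_le_imp_causal_le
      unfolding causal_past_opt_def loc_less_def by auto
  qed (simp add: causal_past_opt_def)
  moreover have "?remote \<subseteq> causal_past M e B - {e}"
  proof (cases "kind M e = Recv")
    case True
    then have m: "msg M (sender M e) e"
      using msg_sender e by blast
    have "sender M e \<noteq> e"
      using msgD[OF m] by auto
    with True show ?thesis
      using causal_past_subset_minus_self msg_imp_causal_le[OF m] by simp
  qed simp
  ultimately show "f \<in> causal_past M e B - {e}" if "f \<in> ?local \<union> ?remote" for f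
    using that by blast
qed

lemma card_causal_past_minus_self:
  assumes "e \<in> ev M"
  shows "card (causal_past M e B - {e}) = (if kind M e = Recv
    then max (card (causal_past_opt M (last_loc M e) B)) (card (causal_past M (sender M e) B))
    else card (causal_past_opt M (last_loc M e) B))"
  using causal_past_minus_self[OF assms]
    down_closed_card_Un[OF causal_past_opt_down_closed down_closed_causal_past] by simp

lemma sat_Since_without_predecessor:
  assumes e: "e \<in> ev M" and "last_loc M e = None"
  shows "sat M I e (Since \<phi> \<psi>) \<longleftrightarrow> sat M I e \<psi>"
proof -
  have "loc_le M f e \<longleftrightarrow> f = e" for f
    using loc_le_iff_last_loc[OF e] assms(2) by simp
  then show ?thesis
    by (auto simp: loc_less_def)
qed

lemma sat_Since_with_predecessor:
  assumes e: "e \<in> ev M" and p: "last_loc M e = Some p"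
  shows "sat M I e (Since \<phi> \<psi>) \<longleftrightarrow> sat M I e \<psi> \<or> sat M I e \<phi> \<and> sat M I p (Since \<phi> \<psi>)"
proof
  have le_e: "loc_le M g e \<longleftrightarrow> g = e \<or> loc_le M g p" for g
    using loc_le_iff_last_loc[OF e] p by simp
  {
    assume "sat M I e (Since \<phi> \<psi>)"
    then obtain f where f: "loc_le M f e" "sat M I f \<psi>"
      and between: "\<forall>g. loc_less M f g \<and> loc_le M g e \<longrightarrow> sat M I g \<phi>"
      by auto
    show "sat M I e \<psi> \<or> sat M I e \<phi> \<and> sat M I p (Since \<phi> \<psi>)"
    proof (cases "f = e")
      case False
      then have "loc_le M f p"
        using f(1) le_e by blast
      moreover have "sat M I e \<phi>"
        using between f(1) False e loc_le_refl unfolding loc_less_def by blast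
      ultimately show ?thesis
        using f between le_e by auto
    qed (use f in simp)
  next
    assume "sat M I e \<psi> \<or> sat M I e \<phi> \<and> sat M I p (Since \<phi> \<psi>)"
    then show "sat M I e (Since \<phi> \<psi>)"
    proof
      assume "sat M I e \<psi>"
      moreover have "\<not> (loc_less M e g \<and> loc_le M g e)" for g
        using loc_le_antisym by (auto simp: loc_less_def)
      ultimately show ?thesis
        using e loc_le_refl by auto
    next
      assume "sat M I e \<phi> \<and> sat M I p (Since \<phi> \<psi>)"
      then obtain f where "sat M I e \<phi>" "loc_le M f p" "sat M I f \<psi>"
        and "\<forall>g. loc_less M f g \<and> loc_le M g p \<longrightarrow> sat M I g \<phi>"
        by auto
      then show ?thesis
        using le_e by auto
    qed
  }
qed

lemma sat_Since_unfold:
  assumes "e \<in> ev M"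
  shows "sat M I e (Since \<phi> \<psi>) \<longleftrightarrow> sat M I e \<psi> \<or>
    sat M I e \<phi> \<and> (case last_loc M e of None \<Rightarrow> False | Some p \<Rightarrow> sat M I p (Since \<phi> \<psi>))"
proof (cases "last_loc M e")
  case None
  then show ?thesis
    using sat_Since_without_predecessor[OF assms None] by (simp del: sat.simps(4))
next
  case (Some p)
  then show ?thesis
    using sat_Since_with_predecessor[OF assms Some] by (simp del: sat.simps(4))
qed

end

section \<open>Local evaluation\<close>

definition coherent_at ::
  "('e, 'l, 'v, 'd) msc \<Rightarrow> ('l, 'v, 'p) cpl set \<Rightarrow> ('p \<Rightarrow> 'd list \<Rightarrow> bool) \<Rightarrow> 'l \<Rightarrow> nat
   \<Rightarrow> ('l \<times> ('l, 'v, 'p) cpl \<Rightarrow> bool option) \<Rightarrow> ('l \<times> 'v \<Rightarrow> 'd option) \<Rightarrow> bool" where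
  "coherent_at M \<Phi> I B k vw vr \<longleftrightarrow>
     (k = 0 \<longrightarrow> (\<forall>x. vr (B, x) = None) \<and> (\<forall>\<psi>. vw (B, \<psi>) = None))
   \<and> (0 < k \<longrightarrow> (\<forall>x\<in>Vars \<Phi>. vr (B, x) = Some (val M (kth M B k) x))
                \<and> (\<forall>\<psi>\<in>sub \<Phi>. vw (B, \<psi>) = Some (sat M I (kth M B k) \<psi>)))"

definition coherent ::
  "('e, 'l, 'v, 'd) msc \<Rightarrow> ('l, 'v, 'p) cpl set \<Rightarrow> ('p \<Rightarrow> 'd list \<Rightarrow> bool) \<Rightarrow> ('l \<Rightarrow> nat) \<Rightarrow> ('l \<Rightarrow> nat)
   \<Rightarrow> ('l \<times> ('l, 'v, 'p) cpl \<Rightarrow> bool option) \<Rightarrow> ('l \<times> 'v \<Rightarrow> 'd option) \<Rightarrow> bool" where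
  "coherent M \<Phi> I K vc' vw vr \<longleftrightarrow> (\<forall>B. vc' B = K B \<and> coherent_at M \<Phi> I B (K B) vw vr)"

context well_formed_msc
begin

lemma Eval_eq_sat:
  assumes e: "e \<in> ev M" and A: "pid M e = A"
    and vc: "\<forall>B. vc s B = card (causal_past M e B)"
    and others: "\<forall>B. B \<noteq> A \<longrightarrow> coherent_at M \<Phi> I B (vc s B) (view s) (var s)"
    and own_var: "\<forall>x\<in>Vars \<Phi>. var s (A, x) = Some (val M e x)"
    and store: "store s = val M e"
    and old: "\<forall>\<psi>\<in>sub \<Phi>. old s \<psi> = (case last_loc M e of None \<Rightarrow> False | Some p \<Rightarrow> sat M I p \<psi>)"
    and "\<psi> \<in> sub \<Phi>"
  shows "Eval I A s \<psi> = sat M I e \<psi>"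
proof -
  have own_last: "last_of M A e = Some e"
    using last_of_own_lifeline[OF e] A by simp
  have other_last: "last_of M B e = (if vc s B = 0 then None else Some (kth M B (vc s B)))" for B
    using last_of_eq_kth vc by simp
  have vc_own: "1 < vc s A \<longleftrightarrow> last_loc M e \<noteq> None"
    using vc one_less_card_causal_past_own_lifeline[OF e] A by simp
  from \<open>\<psi> \<in> sub \<Phi>\<close> show ?thesis
  proof (induction \<psi>)
    case (Atom p ts)
    have "ateval s t = teval M e t" if "t \<in> set ts" for t
    proof (cases t)
      case (RVar B x)
      then have "x \<in> Vars \<Phi>"
        using RVar_of_sub_in_Vars[OF Atom, of B x] that by simp
      then show ?thesis
        using RVar own_var own_last others other_last unfolding coherent_at_def
        by (cases "B = A"; cases "vc s B = 0") auto
    qed (simp add: store)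
    then have "map (ateval s) ts = map (teval M e) ts"
      by simp
    then show ?case
      by (simp only: Eval.simps sat.simps)
  next
    case (At B \<theta>)
    then have "\<theta> \<in> sub \<Phi>"
      using sub_subf_closed subf_refl by fastforce
    then show ?case
      using At own_last others other_last unfolding coherent_at_def
      by (cases "B = A"; cases "vc s B = 0") auto
  next
    case (Y \<theta>)
    then have "\<theta> \<in> sub \<Phi>"
      using sub_subf_closed subf_refl by fastforce
    then show ?case
      using vc_own old by (auto split: option.split)
  next
    case (Since \<theta>1 \<theta>2)
    then have "\<theta>1 \<in> sub \<Phi>" "\<theta>2 \<in> sub \<Phi>"
      using sub_subf_closed subf_refl by fastforce+
    then have "Eval I A s (Since \<theta>1 \<theta>2) \<longleftrightarrow>
        sat M I e \<theta>2 \<or> sat M I e \<theta>1 \<and> 1 < vc s A \<and> old s (Since \<theta>1 \<theta>2)"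
      using Since.IH by simp
    also have "\<dots> \<longleftrightarrow> sat M I e (Since \<theta>1 \<theta>2)"
      using Since.prems vc_own old
      by (cases "last_loc M e") (simp_all add: sat_Since_unfold[OF e] del: sat.simps(4))
    finally show ?case .
  next
    case (Conj \<theta>1 \<theta>2)
    then show ?case
      using sub_subf_closed subf_refl by fastforce
  next
    case (Disj \<theta>1 \<theta>2)
    then show ?case
      using sub_subf_closed subf_refl by fastforce
  next
    case (Neg \<theta>)
    then show ?case
      using sub_subf_closed subf_refl by fastforce
  qed
qed

lemma causal_past_minus_own_lifeline:
  assumes "e \<in> ev M"
  shows "causal_past M e (pid M e) - {e} = {f. loc_less M f e}"
  using causal_past_own_lifeline[OF assms] unfolding loc_less_def by auto

lemma causal_past_minus_other_lifeline: "B \<noteq> pid M e \<Longrightarrow> causal_past M e B - {e} = causal_past M e B"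
  unfolding causal_past_def evs_of_def by auto

lemma view_own_lifeline_iff_last_loc:
  assumes e: "e \<in> ev M" and "\<psi> \<in> sub \<Phi>"
    and own: "coherent_at M \<Phi> I (pid M e) (card {f. loc_less M f e}) vw vr"
  shows "vw (pid M e, \<psi>) = Some True \<longleftrightarrow> (case last_loc M e of None \<Rightarrow> False | Some p \<Rightarrow> sat M I p \<psi>)"
  using own \<open>\<psi> \<in> sub \<Phi>\<close> last_loc_eq_kth[of e] unfolding coherent_at_def by (cases "card {f. loc_less M f e} = 0") auto

lemma coherent_local_step:
  assumes e: "e \<in> ev M" and A: "pid M e = A"
    and coh: "coherent M \<Phi> I (\<lambda>B. card (causal_past M e B - {e})) (vc s) (view s) (var s)"
    and eff: "eff e (store s) = val M e"
  defines "s' \<equiv> local_step \<Phi> I eff A e s"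
  shows "coherent M \<Phi> I (\<lambda>B. card (causal_past M e B)) (vc s') (view s') (var s') \<and> store s' = val M e"
proof -
  define s2 where "s2 = s\<lparr>old := (\<lambda>\<psi>. view s (A, \<psi>) = Some True)\<rparr>"
  define s3 where "s3 = s2\<lparr>vc := (vc s2)(A := Suc (vc s2 A)), store := eff e (store s2),
    var := (\<lambda>(B, x). if B = A \<and> x \<in> Vars \<Phi> then Some (eff e (store s2) x) else var s2 (B, x))\<rparr>"
  have s': "s' = s3\<lparr>view := (\<lambda>(B, \<psi>). if B = A \<and> \<psi> \<in> sub \<Phi> then Some (Eval I A s3 \<psi>) else view s3 (B, \<psi>))\<rparr>"
    unfolding s'_def s3_def s2_def local_step_def Let_def by (rule refl)
  have own: "vc s A = card {f. loc_less M f e}" "coherent_at M \<Phi> I A (card {f. loc_less M f e}) (view s) (var s)"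
    using coh[unfolded coherent_def, rule_format, of A] causal_past_minus_own_lifeline[OF e] A by auto
  have others: "vc s B = card (causal_past M e B)" "coherent_at M \<Phi> I B (vc s B) (view s) (var s)"
    if "B \<noteq> A" for B
    using coh[unfolded coherent_def, rule_format, of B] causal_past_minus_other_lifeline[of B e] that A
    by auto
  have vc3: "vc s3 B = card (causal_past M e B)" for B
    using own others card_causal_past_own_lifeline[OF e] A unfolding s3_def s2_def by (cases "B = A") auto
  have Eval3: "Eval I A s3 \<psi> = sat M I e \<psi>" if "\<psi> \<in> sub \<Phi>" for \<psi>
  proof (rule Eval_eq_sat[OF e A])
    show "\<forall>B. B \<noteq> A \<longrightarrow> coherent_at M \<Phi> I B (vc s3 B) (view s3) (var s3)"
      using others unfolding s3_def s2_def coherent_at_def by simp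
    show "\<forall>\<psi>\<in>sub \<Phi>. old s3 \<psi> = (case last_loc M e of None \<Rightarrow> False | Some p \<Rightarrow> sat M I p \<psi>)"
      using view_own_lifeline_iff_last_loc[OF e _ own(2)[folded A]] A unfolding s3_def s2_def by simp
  qed (use vc3 eff that in \<open>simp_all add: s3_def s2_def\<close>)
  have "vc s' B = card (causal_past M e B)
      \<and> coherent_at M \<Phi> I B (card (causal_past M e B)) (view s') (var s')" for B
  proof (cases "B = A")
    case True
    then show ?thesis
      using own vc3 Eval3 eff kth_card_causal_past_own_lifeline[OF e] card_causal_past_own_lifeline[OF e] A
      unfolding s' coherent_at_def by (simp add: s3_def s2_def)
  next
    case False
    then show ?thesis
      using vc3 others unfolding s' coherent_at_def by (simp add: s3_def s2_def)
  qed
  moreover have "store s' = val M e"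
    using eff unfolding s' s3_def s2_def by simp
  ultimately show ?thesis
    unfolding coherent_def by blast
qed

end

section \<open>Runs of the monitor\<close>

lemma coherent_recv_update:
  assumes "coherent M \<Phi> I K (vc s) (view s) (var s)"
    and "coherent M \<Phi> I K' (mvc \<mu>) (mview \<mu>) (mvar \<mu>)"
  shows "coherent M \<Phi> I (\<lambda>B. max (K B) (K' B))
    (vc (recv_update \<mu> s)) (view (recv_update \<mu> s)) (var (recv_update \<mu> s))"
  unfolding coherent_def
proof
  fix B
  have "vc s B = K B" "coherent_at M \<Phi> I B (K B) (view s) (var s)"
    "mvc \<mu> B = K' B" "coherent_at M \<Phi> I B (K' B) (mview \<mu>) (mvar \<mu>)"
    using assms unfolding coherent_def by blast+
  then show "vc (recv_update \<mu> s) B = max (K B) (K' B)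
    \<and> coherent_at M \<Phi> I B (max (K B) (K' B)) (view (recv_update \<mu> s)) (var (recv_update \<mu> s))"
    by (cases "K B < K' B") (simp_all add: recv_update_def max_def coherent_at_def)
qed

text \<open>The state \<open>s1\<close> of \<^const>\<open>gstep\<close>, reached after step (1).\<close>

definition received_state ::
  "('e, 'l, 'v, 'd) msc \<Rightarrow> ('e, 'l, 'v, 'd, 'p) gstate \<Rightarrow> 'e \<Rightarrow> ('l, 'v, 'd, 'p) lstate" where
  "received_state M g e = (if kind M e = Recv
     then (case snd g (sender M e) of Some \<mu> \<Rightarrow> recv_update \<mu> (fst g (pid M e)) | None \<Rightarrow> fst g (pid M e))
     else fst g (pid M e))"

lemma fst_gstep:
  "fst (gstep M \<Phi> I eff g e) = (fst g)(pid M e := local_step \<Phi> I eff (pid M e) e (received_state M g e))"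
  unfolding gstep_def received_state_def Let_def by simp

lemma snd_gstep:
  "snd (gstep M \<Phi> I eff g e) f = (if f = e \<and> (\<exists>B. kind M e = Send B)
     then Some (let s = local_step \<Phi> I eff (pid M e) e (received_state M g e)
                in \<lparr>mvc = vc s, mview = view s, mvar = var s\<rparr>)
     else snd g f)"
  unfolding gstep_def received_state_def Let_def by (auto split: kind.split)

lemma lin_ext_causal_le_in_prefix:
  assumes "lin_ext M xs" "n < length xs" "causal_le M f (xs ! n)" "f \<noteq> xs ! n"
  shows "f \<in> set (take n xs)"
proof -
  obtain j where j: "j < length xs" "xs ! j = f"
    using assms unfolding lin_ext_def causal_le_def by (metis in_set_conv_nth)
  then have "j < n"
    using assms unfolding lin_ext_def by (metis order.order_iff_strict)
  then show ?thesis
    using j by (auto simp: in_set_conv_nth)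
qed

lemma lin_ext_prefix_not_causal_ge:
  assumes lin: "lin_ext M xs" and n: "n < length xs" and f: "f \<in> set (take n xs)"
  shows "\<not> causal_le M (xs ! n) f"
proof
  assume "causal_le M (xs ! n) f"
  moreover obtain j where "j < n" "xs ! j = f"
    using f by (auto simp: in_set_conv_nth)
  ultimately show False
    using lin n unfolding lin_ext_def by (metis leD order.strict_trans)
qed

locale monitor_run = well_formed_msc M for M :: "('e, 'l, 'v, 'd) msc" +
  fixes xs :: "'e list" and \<Phi> :: "('l, 'v, 'p) cpl set" and I :: "'p \<Rightarrow> 'd list \<Rightarrow> bool"
    and eff :: "'e \<Rightarrow> ('v \<Rightarrow> 'd) \<Rightarrow> ('v \<Rightarrow> 'd)" and \<sigma>0 :: "'l \<Rightarrow> ('v \<Rightarrow> 'd)"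
  assumes lin: "lin_ext M xs" and val_eff: "val_induced M eff \<sigma>0"
begin

definition state_reflects :: "'l \<Rightarrow> 'e option \<Rightarrow> ('l, 'v, 'd, 'p) lstate \<Rightarrow> bool" where
  "state_reflects C p s \<longleftrightarrow>
     coherent M \<Phi> I (\<lambda>B. card (causal_past_opt M p B)) (vc s) (view s) (var s)
   \<and> store s = (case p of None \<Rightarrow> \<sigma>0 C | Some f \<Rightarrow> val M f)"

definition run_inv :: "'e set \<Rightarrow> ('e, 'l, 'v, 'd, 'p) gstate \<Rightarrow> bool" where
  "run_inv P g \<longleftrightarrow>
     (\<forall>C. state_reflects C (loc_max M (evs_of M C \<inter> P)) (fst g C))
   \<and> (\<forall>s\<in>P. \<forall>B. kind M s = Send B \<longrightarrow> (\<exists>\<mu>. snd g s = Some \<mu>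
        \<and> coherent M \<Phi> I (\<lambda>B. card (causal_past M s B)) (mvc \<mu>) (mview \<mu>) (mvar \<mu>)))"

lemma nth_in_ev: "n < length xs \<Longrightarrow> xs ! n \<in> ev M"
  using lin unfolding lin_ext_def by auto

lemma prefix_own_lifeline:
  assumes n: "n < length xs"
  shows "evs_of M (pid M (xs ! n)) \<inter> set (take n xs) = {f. loc_less M f (xs ! n)}"
proof (intro equalityI subsetI)
  fix f
  assume f: "f \<in> evs_of M (pid M (xs ! n)) \<inter> set (take n xs)"
  then have "loc_le M f (xs ! n) \<or> loc_le M (xs ! n) f"
    using loc_le_total nth_in_ev[OF n] unfolding evs_of_def by auto
  moreover have "\<not> causal_le M (xs ! n) f"
    using lin_ext_prefix_not_causal_ge[OF lin n] f by blast
  moreover have "f \<in> ev M"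
    using f unfolding evs_of_def by blast
  ultimately show "f \<in> {f. loc_less M f (xs ! n)}"
    using loc_le_imp_causal_le causal_le_refl unfolding loc_less_def by blast
next
  fix f
  assume "f \<in> {f. loc_less M f (xs ! n)}"
  then have "loc_le M f (xs ! n)" "f \<noteq> xs ! n"
    unfolding loc_less_def by auto
  then show "f \<in> evs_of M (pid M (xs ! n)) \<inter> set (take n xs)"
    using lin_ext_causal_le_in_prefix[OF lin n] loc_le_imp_causal_le loc_leD
    unfolding evs_of_def by blast
qed

lemma loc_max_prefix_own_lifeline:
  assumes n: "n < length xs"
  shows "loc_max M (evs_of M (pid M (xs ! n)) \<inter> set (take (Suc n) xs)) = Some (xs ! n)"
proof (rule loc_max_eqI)
  have "set (take (Suc n) xs) = insert (xs ! n) (set (take n xs))"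
    using n by (simp add: take_Suc_conv_app_nth)
  then have "evs_of M (pid M (xs ! n)) \<inter> set (take (Suc n) xs) = insert (xs ! n) {f. loc_less M f (xs ! n)}"
    using prefix_own_lifeline[OF n] nth_in_ev[OF n] unfolding evs_of_def by auto
  then show "xs ! n \<in> evs_of M (pid M (xs ! n)) \<inter> set (take (Suc n) xs)"
    and "\<forall>g\<in>evs_of M (pid M (xs ! n)) \<inter> set (take (Suc n) xs). loc_le M g (xs ! n)"
    using loc_le_refl nth_in_ev[OF n] unfolding loc_less_def by auto
qed

lemma coherent_received_state:
  assumes n: "n < length xs" and inv: "run_inv (set (take n xs)) g"
  defines "e \<equiv> xs ! n"
  shows "coherent M \<Phi> I (\<lambda>B. card (causal_past M e B - {e}))
      (vc (received_state M g e)) (view (received_state M g e)) (var (received_state M g e))"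
    and "eff e (store (received_state M g e)) = val M e"
proof -
  let ?A = "pid M e"
  have e: "e \<in> ev M"
    using nth_in_ev[OF n] unfolding e_def .
  have "loc_max M (evs_of M ?A \<inter> set (take n xs)) = last_loc M e"
    using prefix_own_lifeline[OF n] unfolding e_def last_loc_eq_loc_max by simp
  then have own: "state_reflects ?A (last_loc M e) (fst g ?A)"
    using inv unfolding run_inv_def by metis
  have store: "store (received_state M g e) = store (fst g ?A)"
    unfolding received_state_def recv_update_def by (auto split: option.split)
  show "eff e (store (received_state M g e)) = val M e"
    using own val_eff e unfolding store state_reflects_def val_induced_def by auto
  show "coherent M \<Phi> I (\<lambda>B. card (causal_past M e B - {e}))
      (vc (received_state M g e)) (view (received_state M g e)) (var (received_state M g e))"
  proof (cases "kind M e = Recv")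
    case True
    let ?s = "sender M e"
    have m: "msg M ?s e"
      using e True by (rule msg_sender)
    then have "causal_le M ?s e" "?s \<noteq> e" "kind M ?s = Send ?A"
      using msg_imp_causal_le[OF m] msgD[OF m] by auto
    moreover from this have "?s \<in> set (take n xs)"
      using lin_ext_causal_le_in_prefix[OF lin n] unfolding e_def by blast
    ultimately obtain \<mu> where \<mu>: "snd g ?s = Some \<mu>"
      and coh: "coherent M \<Phi> I (\<lambda>B. card (causal_past M ?s B)) (mvc \<mu>) (mview \<mu>) (mvar \<mu>)"
      using inv unfolding run_inv_def by blast
    show ?thesis
      using coherent_recv_update[OF _ coh] own \<mu> True card_causal_past_minus_self[OF e]
      unfolding received_state_def state_reflects_def by simp
  next
    case False
    then show ?thesis
      using own card_causal_past_minus_self[OF e]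
      unfolding received_state_def state_reflects_def by simp
  qed
qed

lemma run_inv_gstep:
  assumes n: "n < length xs" and inv: "run_inv (set (take n xs)) g"
  shows "run_inv (set (take (Suc n) xs)) (gstep M \<Phi> I eff g (xs ! n))"
proof -
  define e where "e = xs ! n"
  define A where "A = pid M e"
  define s where "s = local_step \<Phi> I eff A e (received_state M g e)"
  have e: "e \<in> ev M"
    using nth_in_ev[OF n] unfolding e_def .
  have new: "coherent M \<Phi> I (\<lambda>B. card (causal_past M e B)) (vc s) (view s) (var s) \<and> store s = val M e"
    unfolding s_def
    by (rule coherent_local_step[OF e A_def[symmetric]])
      (use coherent_received_state[OF n inv, folded e_def] in simp_all)
  have prefix: "set (take (Suc n) xs) = insert e (set (take n xs))"
    using n unfolding e_def by (simp add: take_Suc_conv_app_nth)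
  have "state_reflects C (loc_max M (evs_of M C \<inter> set (take (Suc n) xs))) (((fst g)(A := s)) C)" for C
  proof (cases "C = A")
    case True
    then show ?thesis
      using new loc_max_prefix_own_lifeline[OF n]
      unfolding state_reflects_def causal_past_opt_def A_def e_def by simp
  next
    case False
    then have "evs_of M C \<inter> set (take (Suc n) xs) = evs_of M C \<inter> set (take n xs)"
      using prefix unfolding A_def evs_of_def by auto
    then show ?thesis
      using False inv unfolding run_inv_def by simp
  qed
  moreover have "\<exists>\<mu>. snd (gstep M \<Phi> I eff g e) f = Some \<mu>
      \<and> coherent M \<Phi> I (\<lambda>B. card (causal_past M f B)) (mvc \<mu>) (mview \<mu>) (mvar \<mu>)"
    if "f \<in> set (take (Suc n) xs)" "kind M f = Send B" for f B
    using that inv new prefix unfolding snd_gstep run_inv_def s_def A_def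
    by (cases "f = e") (auto simp: Let_def)
  ultimately show ?thesis
    unfolding run_inv_def fst_gstep s_def A_def e_def by simp
qed

lemma run_inv_run: "n \<le> length xs \<Longrightarrow> run_inv (set (take n xs)) (run M \<Phi> I eff \<sigma>0 (take n xs))"
proof (induction n)
  case 0
  then show ?case
    unfolding run_inv_def state_reflects_def run_def init_state_def loc_max_def
      coherent_def coherent_at_def causal_past_opt_def by simp
next
  case (Suc n)
  then have "n < length xs"
    by simp
  then have "run M \<Phi> I eff \<sigma>0 (take (Suc n) xs) = gstep M \<Phi> I eff (run M \<Phi> I eff \<sigma>0 (take n xs)) (xs ! n)"
    unfolding run_def by (simp add: take_Suc_conv_app_nth)
  then show ?case
    using run_inv_gstep Suc \<open>n < length xs\<close> by simp
qed

end

theorem lemma2: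
  fixes M :: "('e, 'l :: finite, 'v, 'd) msc"
    and \<Phi> :: "('l, 'v, 'p) cpl set"
    and I :: "'p \<Rightarrow> 'd list \<Rightarrow> bool"
    and eff :: "'e \<Rightarrow> ('v \<Rightarrow> 'd) \<Rightarrow> ('v \<Rightarrow> 'd)"
    and \<sigma>0 :: "'l \<Rightarrow> ('v \<Rightarrow> 'd)"
    and xs :: "'e list" and i :: nat
  assumes "wf_msc M" and "finite \<Phi>" and "val_induced M eff \<sigma>0"
    and "lin_ext M xs" and "i < length xs"
  shows "\<forall>B. let e = xs ! i; s = fst (run M \<Phi> I eff \<sigma>0 (take (Suc i) xs)) (pid M e) in
           vc s B = card {f \<in> evs_of M B. causal_le M f e}
         \<and> (vc s B = 0 \<longrightarrow> (\<forall>x. var s (B, x) = None) \<and> (\<forall>\<psi>. view s (B, \<psi>) = None))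
         \<and> (vc s B > 0 \<longrightarrow> (\<forall>x\<in>Vars \<Phi>. var s (B, x) = Some (val M (kth M B (vc s B)) x)))
         \<and> (vc s B > 0 \<longrightarrow> (\<forall>\<psi>\<in>sub \<Phi>. view s (B, \<psi>) = Some (sat M I (kth M B (vc s B)) \<psi>)))"
proof -
  interpret monitor_run M xs \<Phi> I eff \<sigma>0
    using assms by unfold_locales
  let ?e = "xs ! i"
  let ?s = "fst (run M \<Phi> I eff \<sigma>0 (take (Suc i) xs)) (pid M ?e)"
  have "state_reflects (pid M ?e) (Some ?e) ?s"
    using run_inv_run[of "Suc i"] loc_max_prefix_own_lifeline assms(5)
    unfolding run_inv_def by (metis Suc_leI)
  then have "coherent M \<Phi> I (\<lambda>B. card (causal_past M ?e B)) (vc ?s) (view ?s) (var ?s)"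
    unfolding state_reflects_def causal_past_opt_def by simp
  then show ?thesis
    unfolding coherent_def coherent_at_def causal_past_def Let_def by simp
qed

end
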